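(* Let $0<c<1$, let $(v^*,u^* )$ be the unique saddle point of $\min_v\max_u E(v,u)$, and let $$L_c(v,u)=\frac{\alpha}{2}\sum_s|v_s-v^*_s|^2+\tau\Big(\sum_{s,a}\Big(u^*_{sa}\log\frac{u^*_{sa}}{u_{sa}}+u_{sa}-u^*_{sa}\Big)+\frac{c}{1-c}\sum_s\Big(\tilde u^*_s\log\frac{\tilde u^*_s}{\tilde u_s}+\tilde u_s-\tilde u^*_s\Big)\Big).$$ Consider the interpolating natural gradient dynamics on $\mathbb{R}^{|S|}\times\mathbb{R}^{|S|\times|A|}_{>0}$: $$\frac{dv_{s'}}{dt}=-\Big(v_{s'}-\frac1\alpha\sum_{s,a}K_{ass'}u_{sa}\Big),\ s'\in S,$$ $$\frac{du_{s\cdot}}{dt}=-\tilde u_s\big(\mathrm{diag}(\pi_{s\cdot})-c\,\pi_{s\cdot}\pi_{s\cdot}^{\mathsf T}\big)\Big(\log\frac{u_{s\cdot}}{\tilde u_s}-\frac1\tau\Big(r_{s\cdot}-\sum_{s'}K_{\cdot ss'}v_{s'}\Big)\Big),\ s\in S,$$ where $\pi_{sa}=u_{sa}/\tilde u_s$. Then $L_c$ is a Lyapunov function for this dynamics: $\frac{dL_c}{dt}\le0$ along trajectories, and the only trajectory along which $\frac{dL_c}{dt}=0$ is the constant trajectory $(v,u)=(v^*,u^* )$.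
   Context: Finite MDP: state space $S$, action space $A$, transition probabilities $P_{ass'}$ (with $\sum_{s'}P_{ass'}=1$), rewards $r_{sa}\ge0$, discount $\gamma\in(0,1)$, regularization $\tau>0$, and $\alpha>0$. $K_{ass'}=\delta_{ss'}-\gamma P_{ass'}$, $\tilde u_s=\sum_a u_{sa}$. For fixed $s$, $u_{s\cdot},\pi_{s\cdot},r_{s\cdot}\in\mathbb{R}^{|A|}$ are the vectors indexed by $a$, $K_{\cdot ss'}\in\mathbb{R}^{|A|}$ has $a$-th entry $K_{ass'}$, logarithms and divisions of vectors are entrywise, and $\mathrm{diag}(x)$ is the diagonal matrix with diagonal $x$. $E(v,u)=\frac{\alpha}{2}\sum_s v_s^2+\sum_{s,a}u_{sa}(r_{sa}-\sum_{s'}K_{ass'}v_{s'})-\tau\sum_{s,a}u_{sa}\log(u_{sa}/\tilde u_s)$; this min-max problem has a unique saddle point $(v^*,u^* )$ with $u^*_{sa}>0$. *)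

theory Defs
  imports "HOL-Analysis.Analysis"
begin

text \<open>States have type 's, actions type 'a (both finite).
  P a s s' is the transition probability P_{ass'}, r s a the reward r_{sa},
  v s the value vector, u s a the occupancy variable u_{sa}.\<close>

definition Kmat :: "real \<Rightarrow> ('a \<Rightarrow> 's \<Rightarrow> 's \<Rightarrow> real) \<Rightarrow> 'a \<Rightarrow> 's \<Rightarrow> 's \<Rightarrow> real" where
  "Kmat \<gamma> P a s s' = (if s = s' then 1 else 0) - \<gamma> * P a s s'"

definition utilde :: "('s \<Rightarrow> 'a::finite \<Rightarrow> real) \<Rightarrow> 's \<Rightarrow> real" where
  "utilde u s = (\<Sum>a\<in>UNIV. u s a)"

definition Efun :: "real \<Rightarrow> real \<Rightarrow> real \<Rightarrow> ('a::finite \<Rightarrow> 's::finite \<Rightarrow> 's \<Rightarrow> real)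
    \<Rightarrow> ('s \<Rightarrow> 'a \<Rightarrow> real) \<Rightarrow> ('s \<Rightarrow> real) \<Rightarrow> ('s \<Rightarrow> 'a \<Rightarrow> real) \<Rightarrow> real" where
  "Efun \<alpha> \<gamma> \<tau> P r v u =
     \<alpha> / 2 * (\<Sum>s\<in>UNIV. (v s)^2)
     + (\<Sum>s\<in>UNIV. \<Sum>a\<in>UNIV. u s a * (r s a - (\<Sum>s'\<in>UNIV. Kmat \<gamma> P a s s' * v s')))
     - \<tau> * (\<Sum>s\<in>UNIV. \<Sum>a\<in>UNIV. u s a * ln (u s a / utilde u s))"

definition is_saddle :: "real \<Rightarrow> real \<Rightarrow> real \<Rightarrow> ('a::finite \<Rightarrow> 's::finite \<Rightarrow> 's \<Rightarrow> real)
    \<Rightarrow> ('s \<Rightarrow> 'a \<Rightarrow> real) \<Rightarrow> ('s \<Rightarrow> real) \<Rightarrow> ('s \<Rightarrow> 'a \<Rightarrow> real) \<Rightarrow> bool" where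
  "is_saddle \<alpha> \<gamma> \<tau> P r vs us \<longleftrightarrow>
     (\<forall>s a. us s a > 0) \<and>
     (\<forall>u. (\<forall>s a. u s a > 0) \<longrightarrow> Efun \<alpha> \<gamma> \<tau> P r vs u \<le> Efun \<alpha> \<gamma> \<tau> P r vs us) \<and>
     (\<forall>v. Efun \<alpha> \<gamma> \<tau> P r vs us \<le> Efun \<alpha> \<gamma> \<tau> P r v us)"

definition Lc :: "real \<Rightarrow> real \<Rightarrow> real \<Rightarrow> ('s::finite \<Rightarrow> real) \<Rightarrow> ('s \<Rightarrow> 'a::finite \<Rightarrow> real)
    \<Rightarrow> ('s \<Rightarrow> real) \<Rightarrow> ('s \<Rightarrow> 'a \<Rightarrow> real) \<Rightarrow> real" where
  "Lc c \<alpha> \<tau> vs us v u =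
     \<alpha> / 2 * (\<Sum>s\<in>UNIV. \<bar>v s - vs s\<bar>^2)
     + \<tau> * ((\<Sum>s\<in>UNIV. \<Sum>a\<in>UNIV. us s a * ln (us s a / u s a) + u s a - us s a)
          + c / (1 - c) * (\<Sum>s\<in>UNIV. utilde us s * ln (utilde us s / utilde u s)
                                       + utilde u s - utilde us s))"

definition vfield :: "real \<Rightarrow> real \<Rightarrow> ('a::finite \<Rightarrow> 's::finite \<Rightarrow> 's \<Rightarrow> real)
    \<Rightarrow> ('s \<Rightarrow> real) \<Rightarrow> ('s \<Rightarrow> 'a \<Rightarrow> real) \<Rightarrow> 's \<Rightarrow> real" where
  "vfield \<alpha> \<gamma> P v u s' = - (v s' - 1 / \<alpha> * (\<Sum>s\<in>UNIV. \<Sum>a\<in>UNIV. Kmat \<gamma> P a s s' * u s a))"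

definition policy :: "('s \<Rightarrow> 'a::finite \<Rightarrow> real) \<Rightarrow> 's \<Rightarrow> 'a \<Rightarrow> real" where
  "policy u s a = u s a / utilde u s"

definition gvec :: "real \<Rightarrow> real \<Rightarrow> ('a::finite \<Rightarrow> 's::finite \<Rightarrow> 's \<Rightarrow> real)
    \<Rightarrow> ('s \<Rightarrow> 'a \<Rightarrow> real) \<Rightarrow> ('s \<Rightarrow> real) \<Rightarrow> ('s \<Rightarrow> 'a \<Rightarrow> real) \<Rightarrow> 's \<Rightarrow> 'a \<Rightarrow> real" where
  "gvec \<gamma> \<tau> P r v u s b =
     ln (u s b / utilde u s) - 1 / \<tau> * (r s b - (\<Sum>s'\<in>UNIV. Kmat \<gamma> P b s s' * v s'))"

definition ufield :: "real \<Rightarrow> real \<Rightarrow> real \<Rightarrow> ('a::finite \<Rightarrow> 's::finite \<Rightarrow> 's \<Rightarrow> real)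
    \<Rightarrow> ('s \<Rightarrow> 'a \<Rightarrow> real) \<Rightarrow> ('s \<Rightarrow> real) \<Rightarrow> ('s \<Rightarrow> 'a \<Rightarrow> real) \<Rightarrow> 's \<Rightarrow> 'a \<Rightarrow> real" where
  "ufield c \<gamma> \<tau> P r v u s a =
     - utilde u s * (\<Sum>b\<in>UNIV.
         ((if a = b then policy u s a else 0) - c * policy u s a * policy u s b)
         * gvec \<gamma> \<tau> P r v u s b)"

end

theory Submission
  imports Defs
begin

(*
  Write (vs, us) for the saddle point and pi, pis for the policies of u and us. Along the flow,
    dL_c/dt = - alpha sum_s (v_s - vs_s)^2 - tau sum_{s,a} (u_sa - us_sa) (ln pi_sa - ln pis_sa).
  To see this, pair the vector field with the gradient of L_c: the first-order conditions of the
  saddle point turn the v-part into - alpha |v - vs|^2 plus a cross term <K (u - us), v - vs>,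
  and the weight c/(1-c) on the state-marginal part of L_c cancels the rank-one part c pi pi^T of
  the metric, so that the u-part becomes the policy term minus the same cross term.
  The policy term is a sum of two Kullback-Leibler divergences, hence nonnegative.
  If the rate vanishes identically, then v = vs and pi = pis at all times; then dv/dt = 0 gives
  K^T (u - us) = 0 with u - us = (u~ - us~) pis, and since gamma < 1 the map w |-> K^T (w pis)
  is injective (a contraction argument in l1), so u = us.
*)

section \<open>Relative entropy\<close>

definition kl_term :: "real \<Rightarrow> real \<Rightarrow> real" where
  "kl_term x y = x * ln (x / y) - x + y"

lemma kl_term_nonneg:
  assumes "x > 0" "y > 0"
  shows "0 \<le> kl_term x y"
proof -
  have "ln (y / x) \<le> y / x - 1" using assms by (intro ln_le_minus_one) auto
  then have "x * ln (y / x) \<le> y - x" using assms by (simp add: field_simps mult_left_mono)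
  then show ?thesis using assms by (simp add: kl_term_def ln_div algebra_simps)
qed

lemma kl_term_eq_0_iff:
  assumes "x > 0" "y > 0"
  shows "kl_term x y = 0 \<longleftrightarrow> x = y"
proof
  assume "kl_term x y = 0"
  then have "ln (y / x) = y / x - 1" using assms by (simp add: kl_term_def ln_div field_simps)
  then have "y / x = 1" using assms by (intro ln_eq_minus_one) auto
  then show "x = y" using assms by simp
qed (simp add: kl_term_def)

lemma kl_term_has_real_derivative:
  assumes "x t > 0" "y > 0" "(x has_real_derivative x') (at t)"
  shows "((\<lambda>t. kl_term y (x t)) has_real_derivative (1 - y / x t) * x') (at t)"
  unfolding kl_term_def using assms by (auto intro!: derivative_eq_intros simp: field_simps)

lemma sum_diff_mult_ln_normalized_eq:
  fixes u w :: "'a::finite \<Rightarrow> real"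
  assumes u: "\<And>a. u a > 0" and w: "\<And>a. w a > 0"
  defines "p \<equiv> \<lambda>a. u a / sum u UNIV" and "q \<equiv> \<lambda>a. w a / sum w UNIV"
  shows "(\<Sum>a\<in>UNIV. (u a - w a) * (ln (p a) - ln (q a)))
       = sum u UNIV * (\<Sum>a\<in>UNIV. kl_term (p a) (q a)) + sum w UNIV * (\<Sum>a\<in>UNIV. kl_term (q a) (p a))"
proof -
  have U: "sum u UNIV > 0" and W: "sum w UNIV > 0" using u w by (auto intro: sum_pos)
  have p: "p a > 0" and q: "q a > 0" and up: "u a = sum u UNIV * p a" and wq: "w a = sum w UNIV * q a"
    for a
    using u w U W by (auto simp: p_def q_def)
  have pointwise: "(u a - w a) * (ln (p a) - ln (q a))
      = sum u UNIV * kl_term (p a) (q a) + sum w UNIV * kl_term (q a) (p a)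
        + (sum u UNIV - sum w UNIV) * (p a - q a)" for a
    using p[of a] q[of a] unfolding up[of a] wq[of a] by (simp add: kl_term_def ln_div algebra_simps)
  have "sum p UNIV = 1" "sum q UNIV = 1"
    using U W by (simp_all add: p_def q_def sum_divide_distrib[symmetric])
  then have "(\<Sum>a\<in>UNIV. (sum u UNIV - sum w UNIV) * (p a - q a)) = 0"
    by (simp add: sum_distrib_left[symmetric] sum_subtractf)
  then show ?thesis
    unfolding pointwise sum.distrib by (simp add: sum_distrib_left)
qed

lemma sum_diff_mult_ln_normalized_nonneg:
  fixes u w :: "'a::finite \<Rightarrow> real"
  assumes "\<And>a. u a > 0" "\<And>a. w a > 0"
  shows "0 \<le> (\<Sum>a\<in>UNIV. (u a - w a) * (ln (u a / sum u UNIV) - ln (w a / sum w UNIV)))"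
proof -
  have "sum u UNIV > 0" "sum w UNIV > 0" using assms by (auto intro: sum_pos)
  moreover have "0 \<le> kl_term (u a / sum u UNIV) (w a / sum w UNIV)"
    and "0 \<le> kl_term (w a / sum w UNIV) (u a / sum u UNIV)" for a
    using assms calculation by (auto intro: kl_term_nonneg)
  ultimately show ?thesis
    unfolding sum_diff_mult_ln_normalized_eq[of u w, OF assms]
    by (intro add_nonneg_nonneg mult_nonneg_nonneg sum_nonneg) (auto intro: less_imp_le assms)
qed

lemma sum_diff_mult_ln_normalized_eq_0_imp:
  fixes u w :: "'a::finite \<Rightarrow> real"
  assumes u: "\<And>a. u a > 0" and w: "\<And>a. w a > 0"
    and "(\<Sum>a\<in>UNIV. (u a - w a) * (ln (u a / sum u UNIV) - ln (w a / sum w UNIV))) = 0"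
  shows "u a / sum u UNIV = w a / sum w UNIV"
proof -
  have U: "sum u UNIV > 0" and W: "sum w UNIV > 0" using u w by (auto intro: sum_pos)
  define p q where "p a = u a / sum u UNIV" and "q a = w a / sum w UNIV" for a
  have p: "p a > 0" and q: "q a > 0" for a using u w U W by (auto simp: p_def q_def)
  have "sum u UNIV * (\<Sum>a\<in>UNIV. kl_term (p a) (q a)) + sum w UNIV * (\<Sum>a\<in>UNIV. kl_term (q a) (p a)) = 0"
    using assms(3) sum_diff_mult_ln_normalized_eq[of u w, OF u w] by (simp add: p_def q_def)
  moreover have "0 \<le> (\<Sum>a\<in>UNIV. kl_term (p a) (q a))" "0 \<le> (\<Sum>a\<in>UNIV. kl_term (q a) (p a))"
    using p q by (auto intro: sum_nonneg kl_term_nonneg)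
  ultimately have "(\<Sum>a\<in>UNIV. kl_term (p a) (q a)) = 0"
    using U W by (smt (verit) mult_nonneg_nonneg mult_pos_pos)
  then have "kl_term (p a) (q a) = 0"
    using p q by (simp add: sum_nonneg_eq_0_iff kl_term_nonneg)
  then show ?thesis using p q by (simp add: kl_term_eq_0_iff p_def q_def)
qed

section \<open>The metric of the u-dynamics\<close>

lemma utilde_pos: "(\<And>a. u s a > 0) \<Longrightarrow> utilde u s > 0"
  unfolding utilde_def by (intro sum_pos) auto

definition metric_mult :: "real \<Rightarrow> ('s \<Rightarrow> 'a::finite \<Rightarrow> real) \<Rightarrow> 's \<Rightarrow> ('a \<Rightarrow> real) \<Rightarrow> 'a \<Rightarrow> real" where
  "metric_mult c u s g a =
     - utilde u s * (\<Sum>b\<in>UNIV. ((if a = b then policy u s a else 0) - c * policy u s a * policy u s b) * g b)"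

lemma ufield_eq_metric_mult: "ufield c \<gamma> \<tau> P r v u s a = metric_mult c u s (gvec \<gamma> \<tau> P r v u s) a"
  by (simp add: ufield_def metric_mult_def)

lemma metric_mult_eq:
  assumes "utilde u s \<noteq> 0"
  shows "metric_mult c u s g a = u s a * (c * (\<Sum>b\<in>UNIV. u s b * g b) / utilde u s - g a)"
proof -
  have "(\<Sum>b\<in>UNIV. ((if a = b then policy u s a else 0) - c * policy u s a * policy u s b) * g b)
      = policy u s a * g a - c * policy u s a / utilde u s * (\<Sum>b\<in>UNIV. u s b * g b)"
    by (simp add: sum_subtractf left_diff_distrib sum_distrib_left policy_def if_distrib[of "\<lambda>x. x * _"]
        mult.assoc cong: if_cong)
  then show ?thesis using assms by (simp add: metric_mult_def policy_def field_simps)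
qed

lemma sum_metric_mult:
  assumes "utilde u s \<noteq> 0"
  shows "(\<Sum>a\<in>UNIV. metric_mult c u s g a) = - (1 - c) * (\<Sum>a\<in>UNIV. u s a * g a)"
proof -
  define S where "S = (\<Sum>b\<in>UNIV. u s b * g b)"
  have "(\<Sum>a\<in>UNIV. metric_mult c u s g a) = (\<Sum>a\<in>UNIV. c * S / utilde u s * u s a - u s a * g a)"
    using assms by (intro sum.cong) (simp_all add: metric_mult_eq S_def algebra_simps)
  also have "\<dots> = c * S / utilde u s * utilde u s - S"
    by (simp add: sum_subtractf sum_distrib_left[symmetric] sum_divide_distrib[symmetric]
        utilde_def S_def[symmetric])
  finally show ?thesis using assms by (simp add: S_def algebra_simps)
qed

lemma metric_mult_pairing:
  assumes u: "\<And>a. u s a > 0" and c: "c \<noteq> 1"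
  shows "(\<Sum>a\<in>UNIV. (1 - w s a / u s a) * metric_mult c u s g a)
           + c / (1 - c) * ((1 - utilde w s / utilde u s) * (\<Sum>a\<in>UNIV. metric_mult c u s g a))
       = (\<Sum>a\<in>UNIV. (w s a - u s a) * g a)"
proof -
  define S where "S = (\<Sum>b\<in>UNIV. u s b * g b)"
  have U: "utilde u s > 0" using u by (rule utilde_pos)
  have "(\<Sum>a\<in>UNIV. (1 - w s a / u s a) * metric_mult c u s g a)
      = (\<Sum>a\<in>UNIV. metric_mult c u s g a + w s a * g a - c * S / utilde u s * w s a)"
    using u[THEN less_imp_neq, symmetric] U
    by (intro sum.cong) (simp_all add: metric_mult_eq S_def field_simps)
  also have "\<dots> = - (1 - c) * S + (\<Sum>a\<in>UNIV. w s a * g a) - c * S / utilde u s * utilde w s"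
    using U by (simp add: sum.distrib sum_subtractf sum_metric_mult S_def utilde_def sum_distrib_left)
  finally have pointwise_part: "(\<Sum>a\<in>UNIV. (1 - w s a / u s a) * metric_mult c u s g a)
      = - (1 - c) * S + (\<Sum>a\<in>UNIV. w s a * g a) - c * S / utilde u s * utilde w s" .
  have marginal_part: "c / (1 - c) * ((1 - utilde w s / utilde u s) * (\<Sum>a\<in>UNIV. metric_mult c u s g a))
      = - c * S + c * S / utilde u s * utilde w s"
    using U c unfolding sum_metric_mult[OF U[THEN less_imp_neq, symmetric]] S_def[symmetric]
    by (simp add: field_simps)
  show ?thesis
    unfolding pointwise_part marginal_part by (simp add: S_def left_diff_distrib sum_subtractf)
qed

section \<open>First-order conditions at the saddle point\<close>

lemma entropy_directional_deriv:
  fixes w d :: "'a::finite \<Rightarrow> real"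
  assumes w: "\<And>a. w a > 0"
  shows "((\<lambda>h. \<Sum>a\<in>UNIV. (w a + h * d a) * ln ((w a + h * d a) / (\<Sum>b\<in>UNIV. w b + h * d b)))
           has_real_derivative (\<Sum>a\<in>UNIV. d a * ln (w a / sum w UNIV))) (at 0)"
proof -
  have W: "sum w UNIV > 0" using w by (intro sum_pos) auto
  have sum_eq: "(\<Sum>b\<in>UNIV. w b + h * d b) = sum w UNIV + h * sum d UNIV" for h
    by (simp add: sum.distrib sum_distrib_left)
  have "((\<lambda>h. \<Sum>a\<in>UNIV. (w a + h * d a) * ln ((w a + h * d a) / (sum w UNIV + h * sum d UNIV)))
      has_real_derivative (\<Sum>a\<in>UNIV. d a * ln (w a / sum w UNIV) + d a - sum d UNIV / sum w UNIV * w a)) (at 0)"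
    using w[THEN less_imp_neq, symmetric] w W
    by (intro DERIV_sum) (auto intro!: derivative_eq_intros simp: field_simps)
  moreover have "(\<Sum>a\<in>UNIV. d a * ln (w a / sum w UNIV) + d a - sum d UNIV / sum w UNIV * w a)
      = (\<Sum>a\<in>UNIV. d a * ln (w a / sum w UNIV))"
    using W by (simp add: sum.distrib sum_subtractf sum_distrib_left[symmetric] sum_divide_distrib[symmetric])
  ultimately show ?thesis unfolding sum_eq by simp
qed

lemma Efun_u_directional_deriv:
  assumes u: "\<And>s a. u s a > 0"
  shows "((\<lambda>h. Efun \<alpha> \<gamma> \<tau> P r v (\<lambda>s a. u s a + h * d s a)) has_real_derivative
           (\<Sum>s\<in>UNIV. \<Sum>a\<in>UNIV. d s a * (r s a - (\<Sum>s'\<in>UNIV. Kmat \<gamma> P a s s' * v s') - \<tau> * ln (policy u s a))))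
         (at 0)"
proof -
  have "((\<lambda>h. Efun \<alpha> \<gamma> \<tau> P r v (\<lambda>s a. u s a + h * d s a)) has_real_derivative
      0 + (\<Sum>s\<in>UNIV. \<Sum>a\<in>UNIV. d s a * (r s a - (\<Sum>s'\<in>UNIV. Kmat \<gamma> P a s s' * v s')))
        - \<tau> * (\<Sum>s\<in>UNIV. \<Sum>a\<in>UNIV. d s a * ln (u s a / sum (u s) UNIV))) (at 0)"
    unfolding Efun_def utilde_def
    by (intro DERIV_diff DERIV_add DERIV_cmult DERIV_const DERIV_sum entropy_directional_deriv u)
       (auto intro!: derivative_eq_intros)
  then show ?thesis
    by (rule DERIV_cong)
       (simp add: policy_def utilde_def right_diff_distrib sum_subtractf sum_distrib_left mult.left_commute)
qed

lemma Efun_v_directional_deriv: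
  "((\<lambda>h. Efun \<alpha> \<gamma> \<tau> P r (\<lambda>s. v s + h * e s) u) has_real_derivative
      \<alpha> * (\<Sum>s\<in>UNIV. v s * e s) - (\<Sum>s\<in>UNIV. \<Sum>a\<in>UNIV. u s a * (\<Sum>s'\<in>UNIV. Kmat \<gamma> P a s s' * e s')))
    (at 0)"
proof -
  have "((\<lambda>h. Efun \<alpha> \<gamma> \<tau> P r (\<lambda>s. v s + h * e s) u) has_real_derivative
      \<alpha> / 2 * (\<Sum>s\<in>UNIV. 2 * v s * e s)
      + (\<Sum>s\<in>UNIV. \<Sum>a\<in>UNIV. u s a * (0 - (\<Sum>s'\<in>UNIV. Kmat \<gamma> P a s s' * e s'))) - 0) (at 0)"
    unfolding Efun_def
    by (intro DERIV_diff DERIV_add DERIV_cmult DERIV_const DERIV_sum)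
       (auto intro!: derivative_eq_intros)
  then show ?thesis
    by (rule DERIV_cong) (simp add: sum_negf sum_distrib_left mult.assoc)
qed

lemma saddle_stationary_v:
  assumes "is_saddle \<alpha> \<gamma> \<tau> P r vs us"
  shows "\<alpha> * vs s0 = (\<Sum>s\<in>UNIV. \<Sum>a\<in>UNIV. Kmat \<gamma> P a s s0 * us s a)"
proof -
  define e :: "_ \<Rightarrow> real" where "e s = of_bool (s = s0)" for s
  have "\<alpha> * (\<Sum>s\<in>UNIV. vs s * e s) - (\<Sum>s\<in>UNIV. \<Sum>a\<in>UNIV. us s a * (\<Sum>s'\<in>UNIV. Kmat \<gamma> P a s s' * e s')) = 0"
  proof (rule DERIV_local_min[OF Efun_v_directional_deriv zero_less_one], intro allI impI)
    fix h :: real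
    show "Efun \<alpha> \<gamma> \<tau> P r (\<lambda>s. vs s + 0 * e s) us \<le> Efun \<alpha> \<gamma> \<tau> P r (\<lambda>s. vs s + h * e s) us"
      using assms by (simp add: is_saddle_def)
  qed
  then show ?thesis by (simp add: e_def mult.commute)
qed

lemma saddle_stationary_u:
  assumes "is_saddle \<alpha> \<gamma> \<tau> P r vs us"
  shows "\<tau> * ln (policy us s0 a0) = r s0 a0 - (\<Sum>s'\<in>UNIV. Kmat \<gamma> P a0 s0 s' * vs s')"
proof -
  have us: "\<And>s a. us s a > 0"
    and max: "\<And>u. \<forall>s a. u s a > 0 \<Longrightarrow> Efun \<alpha> \<gamma> \<tau> P r vs u \<le> Efun \<alpha> \<gamma> \<tau> P r vs us"
    using assms by (auto simp: is_saddle_def)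
  define d :: "_ \<Rightarrow> _ \<Rightarrow> real" where "d s a = of_bool (s = s0 \<and> a = a0)" for s a
  have "(\<Sum>s\<in>UNIV. \<Sum>a\<in>UNIV. d s a * (r s a - (\<Sum>s'\<in>UNIV. Kmat \<gamma> P a s s' * vs s') - \<tau> * ln (policy us s a))) = 0"
  proof (rule DERIV_local_max[OF Efun_u_directional_deriv[OF us] us], intro allI impI)
    fix h assume "\<bar>0 - h\<bar> < us s0 a0"
    then have "\<forall>s a. us s a + h * d s a > 0" using us by (auto simp: d_def)
    then show "Efun \<alpha> \<gamma> \<tau> P r vs (\<lambda>s a. us s a + h * d s a) \<le> Efun \<alpha> \<gamma> \<tau> P r vs (\<lambda>s a. us s a + 0 * d s a)"
      by (simp add: max)
  qed
  then show ?thesis by (simp add: d_def of_bool_conj mult.assoc flip: sum_distrib_left)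
qed

section \<open>Injectivity of the discounted flow\<close>

lemma sum_Kmat_flow:
  fixes P :: "'a::finite \<Rightarrow> 's::finite \<Rightarrow> 's \<Rightarrow> real"
  assumes "\<And>s. (\<Sum>a\<in>UNIV. p s a) = 1"
  shows "(\<Sum>s\<in>UNIV. \<Sum>a\<in>UNIV. Kmat \<gamma> P a s s' * (w s * p s a))
       = w s' - \<gamma> * (\<Sum>s\<in>UNIV. \<Sum>a\<in>UNIV. P a s s' * (w s * p s a))"
proof -
  have "(\<Sum>s\<in>UNIV. \<Sum>a\<in>UNIV. w s * p s a * of_bool (s = s')) = w s'"
    using assms by (simp add: sum_distrib_left[symmetric] flip: sum_distrib_right)
  then show ?thesis
    by (simp add: Kmat_def of_bool_def[symmetric] left_diff_distrib sum_subtractf sum_distrib_left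
        mult.assoc mult.commute[of "of_bool _"])
qed

lemma sum_abs_stochastic_flow_le:
  fixes P :: "'a::finite \<Rightarrow> 's::finite \<Rightarrow> 's \<Rightarrow> real"
  assumes P_nonneg: "\<And>a s s'. P a s s' \<ge> 0" and P_sum: "\<And>a s. (\<Sum>s'\<in>UNIV. P a s s') = 1"
    and p_nonneg: "\<And>s a. p s a \<ge> 0" and p_sum: "\<And>s. (\<Sum>a\<in>UNIV. p s a) = 1"
  shows "(\<Sum>s'\<in>UNIV. \<bar>\<Sum>s\<in>UNIV. \<Sum>a\<in>UNIV. P a s s' * (w s * p s a)\<bar>) \<le> (\<Sum>s\<in>UNIV. \<bar>w s\<bar>)"
proof -
  have "(\<Sum>s'\<in>UNIV. \<bar>\<Sum>s\<in>UNIV. \<Sum>a\<in>UNIV. P a s s' * (w s * p s a)\<bar>)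
      \<le> (\<Sum>s'\<in>UNIV. \<Sum>s\<in>UNIV. \<Sum>a\<in>UNIV. P a s s' * (\<bar>w s\<bar> * p s a))"
    using P_nonneg p_nonneg
    by (intro sum_mono order.trans[OF sum_abs] order.trans[OF sum_abs]) (simp add: abs_mult)
  also have "\<dots> = (\<Sum>s\<in>UNIV. \<Sum>s'\<in>UNIV. \<Sum>a\<in>UNIV. P a s s' * (\<bar>w s\<bar> * p s a))"
    by (rule sum.swap)
  also have "\<dots> = (\<Sum>s\<in>UNIV. \<Sum>a\<in>UNIV. \<Sum>s'\<in>UNIV. P a s s' * (\<bar>w s\<bar> * p s a))"
    by (rule sum.cong[OF refl], rule sum.swap)
  also have "\<dots> = (\<Sum>s\<in>UNIV. \<Sum>a\<in>UNIV. (\<Sum>s'\<in>UNIV. P a s s') * (\<bar>w s\<bar> * p s a))"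
    by (simp only: sum_distrib_right)
  also have "\<dots> = (\<Sum>s\<in>UNIV. \<bar>w s\<bar>)"
    by (simp add: P_sum p_sum flip: sum_distrib_left)
  finally show ?thesis .
qed

lemma Kmat_flow_eq_0_imp_zero:
  fixes P :: "'a::finite \<Rightarrow> 's::finite \<Rightarrow> 's \<Rightarrow> real"
  assumes P_nonneg: "\<And>a s s'. P a s s' \<ge> 0" and P_sum: "\<And>a s. (\<Sum>s'\<in>UNIV. P a s s') = 1"
    and \<gamma>: "0 \<le> \<gamma>" "\<gamma> < 1"
    and p_nonneg: "\<And>s a. p s a \<ge> 0" and p_sum: "\<And>s. (\<Sum>a\<in>UNIV. p s a) = 1"
    and flow: "\<And>s'. (\<Sum>s\<in>UNIV. \<Sum>a\<in>UNIV. Kmat \<gamma> P a s s' * (w s * p s a)) = 0"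
  shows "w = (\<lambda>s. 0)"
proof -
  define Q where "Q s' = (\<Sum>s\<in>UNIV. \<Sum>a\<in>UNIV. P a s s' * (w s * p s a))" for s'
  have "w s' = \<gamma> * Q s'" for s'
    using flow[of s'] sum_Kmat_flow[of p \<gamma> P s' w, OF p_sum] by (simp add: Q_def)
  then have "(\<Sum>s\<in>UNIV. \<bar>w s\<bar>) = \<gamma> * (\<Sum>s'\<in>UNIV. \<bar>Q s'\<bar>)"
    using \<gamma> by (simp add: abs_mult sum_distrib_left)
  also have "\<dots> \<le> \<gamma> * (\<Sum>s\<in>UNIV. \<bar>w s\<bar>)"
    unfolding Q_def using \<gamma> by (intro mult_left_mono sum_abs_stochastic_flow_le P_nonneg P_sum p_nonneg p_sum)
  finally have "(1 - \<gamma>) * (\<Sum>s\<in>UNIV. \<bar>w s\<bar>) \<le> 0"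
    by (simp add: algebra_simps)
  then have "(\<Sum>s\<in>UNIV. \<bar>w s\<bar>) = 0"
    using \<gamma> by (simp add: mult_le_0_iff antisym sum_nonneg)
  then show ?thesis by (simp add: sum_nonneg_eq_0_iff fun_eq_iff)
qed

section \<open>The rate of change of the Lyapunov function\<close>

lemma sum_bilinear_transpose:
  fixes K :: "'a::finite \<Rightarrow> 's::finite \<Rightarrow> 's \<Rightarrow> real"
  shows "(\<Sum>s'\<in>UNIV. x s' * (\<Sum>s\<in>UNIV. \<Sum>a\<in>UNIV. K a s s' * y s a))
       = (\<Sum>s\<in>UNIV. \<Sum>a\<in>UNIV. y s a * (\<Sum>s'\<in>UNIV. K a s s' * x s'))"
proof -
  have "(\<Sum>s'\<in>UNIV. x s' * (\<Sum>s\<in>UNIV. \<Sum>a\<in>UNIV. K a s s' * y s a))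
      = (\<Sum>s'\<in>UNIV. \<Sum>s\<in>UNIV. \<Sum>a\<in>UNIV. K a s s' * x s' * y s a)"
    by (simp add: sum_distrib_left algebra_simps)
  also have "\<dots> = (\<Sum>s\<in>UNIV. \<Sum>a\<in>UNIV. \<Sum>s'\<in>UNIV. K a s s' * x s' * y s a)"
    by (subst sum.swap) (rule sum.cong[OF refl], rule sum.swap)
  also have "\<dots> = (\<Sum>s\<in>UNIV. \<Sum>a\<in>UNIV. y s a * (\<Sum>s'\<in>UNIV. K a s s' * x s'))"
    by (simp add: sum_distrib_left algebra_simps)
  finally show ?thesis .
qed

lemma vfield_pairing:
  fixes P :: "'a::finite \<Rightarrow> 's::finite \<Rightarrow> 's \<Rightarrow> real"
  assumes "is_saddle \<alpha> \<gamma> \<tau> P r vs us" and "\<alpha> \<noteq> 0"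
  shows "\<alpha> * (\<Sum>s\<in>UNIV. (v s - vs s) * vfield \<alpha> \<gamma> P v u s)
       = - \<alpha> * (\<Sum>s\<in>UNIV. (v s - vs s)\<^sup>2)
         + (\<Sum>s\<in>UNIV. \<Sum>a\<in>UNIV. (u s a - us s a) * (\<Sum>s'\<in>UNIV. Kmat \<gamma> P a s s' * (v s' - vs s')))"
proof -
  have flow: "(\<Sum>s\<in>UNIV. \<Sum>a\<in>UNIV. Kmat \<gamma> P a s s' * (u s a - us s a))
      = (\<Sum>s\<in>UNIV. \<Sum>a\<in>UNIV. Kmat \<gamma> P a s s' * u s a) - \<alpha> * vs s'" for s'
    by (simp add: saddle_stationary_v[OF assms(1)] right_diff_distrib sum_subtractf)
  have pointwise: "\<alpha> * ((v s' - vs s') * vfield \<alpha> \<gamma> P v u s')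
      = - \<alpha> * (v s' - vs s')\<^sup>2 + (v s' - vs s') * (\<Sum>s\<in>UNIV. \<Sum>a\<in>UNIV. Kmat \<gamma> P a s s' * (u s a - us s a))" for s'
    unfolding flow vfield_def using assms(2) by (simp add: field_simps power2_eq_square)
  have "\<alpha> * (\<Sum>s\<in>UNIV. (v s - vs s) * vfield \<alpha> \<gamma> P v u s)
      = (\<Sum>s'\<in>UNIV. - \<alpha> * (v s' - vs s')\<^sup>2
           + (v s' - vs s') * (\<Sum>s\<in>UNIV. \<Sum>a\<in>UNIV. Kmat \<gamma> P a s s' * (u s a - us s a)))"
    by (subst sum_distrib_left) (rule sum.cong[OF refl], rule pointwise)
  then show ?thesis
    by (simp only: sum.distrib sum_distrib_left[symmetric] sum_bilinear_transpose)
qed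

lemma ufield_pairing:
  fixes P :: "'a::finite \<Rightarrow> 's::finite \<Rightarrow> 's \<Rightarrow> real"
  assumes "is_saddle \<alpha> \<gamma> \<tau> P r vs us" and u: "\<And>s a. u s a > 0" and "c \<noteq> 1" "\<tau> \<noteq> 0"
  shows "\<tau> * ((\<Sum>s\<in>UNIV. \<Sum>a\<in>UNIV. (1 - us s a / u s a) * ufield c \<gamma> \<tau> P r v u s a)
              + c / (1 - c) * (\<Sum>s\<in>UNIV. (1 - utilde us s / utilde u s) * (\<Sum>a\<in>UNIV. ufield c \<gamma> \<tau> P r v u s a)))
       = - \<tau> * (\<Sum>s\<in>UNIV. \<Sum>a\<in>UNIV. (u s a - us s a) * (ln (policy u s a) - ln (policy us s a)))
         - (\<Sum>s\<in>UNIV. \<Sum>a\<in>UNIV. (u s a - us s a) * (\<Sum>s'\<in>UNIV. Kmat \<gamma> P a s s' * (v s' - vs s')))"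
proof -
  have gvec_eq: "\<tau> * gvec \<gamma> \<tau> P r v u s a
      = \<tau> * (ln (policy u s a) - ln (policy us s a)) + (\<Sum>s'\<in>UNIV. Kmat \<gamma> P a s s' * (v s' - vs s'))" for s a
    using saddle_stationary_u[OF assms(1), of s a] assms(4)
    by (simp add: gvec_def policy_def right_diff_distrib sum_subtractf field_simps)
  have per_state: "(\<Sum>a\<in>UNIV. (1 - us s a / u s a) * metric_mult c u s (gvec \<gamma> \<tau> P r v u s) a)
         + c / (1 - c) * ((1 - utilde us s / utilde u s) * (\<Sum>a\<in>UNIV. metric_mult c u s (gvec \<gamma> \<tau> P r v u s) a))
      = (\<Sum>a\<in>UNIV. (us s a - u s a) * gvec \<gamma> \<tau> P r v u s a)" for s
    using u assms(3) by (rule metric_mult_pairing)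
  have pointwise: "\<tau> * ((us s a - u s a) * gvec \<gamma> \<tau> P r v u s a)
      = - (\<tau> * ((u s a - us s a) * (ln (policy u s a) - ln (policy us s a))))
        - (u s a - us s a) * (\<Sum>s'\<in>UNIV. Kmat \<gamma> P a s s' * (v s' - vs s'))" for s a
    unfolding mult.left_commute[of \<tau>] gvec_eq by (simp add: algebra_simps)
  have "(\<Sum>s\<in>UNIV. \<Sum>a\<in>UNIV. (1 - us s a / u s a) * ufield c \<gamma> \<tau> P r v u s a)
         + c / (1 - c) * (\<Sum>s\<in>UNIV. (1 - utilde us s / utilde u s) * (\<Sum>a\<in>UNIV. ufield c \<gamma> \<tau> P r v u s a))
      = (\<Sum>s\<in>UNIV. \<Sum>a\<in>UNIV. (us s a - u s a) * gvec \<gamma> \<tau> P r v u s a)"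
    unfolding ufield_eq_metric_mult sum_distrib_left[of "c / (1 - c)"] sum.distrib[symmetric] per_state ..
  then have "\<tau> * ((\<Sum>s\<in>UNIV. \<Sum>a\<in>UNIV. (1 - us s a / u s a) * ufield c \<gamma> \<tau> P r v u s a)
         + c / (1 - c) * (\<Sum>s\<in>UNIV. (1 - utilde us s / utilde u s) * (\<Sum>a\<in>UNIV. ufield c \<gamma> \<tau> P r v u s a)))
      = (\<Sum>s\<in>UNIV. \<Sum>a\<in>UNIV. \<tau> * ((us s a - u s a) * gvec \<gamma> \<tau> P r v u s a))"
    by (simp only: sum_distrib_left)
  then show ?thesis
    unfolding pointwise by (simp only: sum_subtractf sum_negf sum_distrib_left mult_minus_left)
qed

definition dissipation :: "real \<Rightarrow> real \<Rightarrow> ('s::finite \<Rightarrow> real) \<Rightarrow> ('s \<Rightarrow> 'a::finite \<Rightarrow> real)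
    \<Rightarrow> ('s \<Rightarrow> real) \<Rightarrow> ('s \<Rightarrow> 'a \<Rightarrow> real) \<Rightarrow> real" where
  "dissipation \<alpha> \<tau> vs us v u =
     \<alpha> * (\<Sum>s\<in>UNIV. (v s - vs s)\<^sup>2)
     + \<tau> * (\<Sum>s\<in>UNIV. \<Sum>a\<in>UNIV. (u s a - us s a) * (ln (policy u s a) - ln (policy us s a)))"

lemma Lc_rate_eq_neg_dissipation:
  fixes P :: "'a::finite \<Rightarrow> 's::finite \<Rightarrow> 's \<Rightarrow> real"
  assumes "is_saddle \<alpha> \<gamma> \<tau> P r vs us" and "\<And>s a. u s a > 0" and "c \<noteq> 1" "\<tau> \<noteq> 0" "\<alpha> \<noteq> 0"
  shows "\<alpha> * (\<Sum>s\<in>UNIV. (v s - vs s) * vfield \<alpha> \<gamma> P v u s)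
         + \<tau> * ((\<Sum>s\<in>UNIV. \<Sum>a\<in>UNIV. (1 - us s a / u s a) * ufield c \<gamma> \<tau> P r v u s a)
                + c / (1 - c) * (\<Sum>s\<in>UNIV. (1 - utilde us s / utilde u s) * (\<Sum>a\<in>UNIV. ufield c \<gamma> \<tau> P r v u s a)))
       = - dissipation \<alpha> \<tau> vs us v u"
  unfolding vfield_pairing[OF assms(1,5)] ufield_pairing[OF assms(1-4)] dissipation_def by simp

lemma Lc_eq_kl_term:
  "Lc c \<alpha> \<tau> vs us v u = \<alpha> / 2 * (\<Sum>s\<in>UNIV. (v s - vs s)\<^sup>2)
     + \<tau> * ((\<Sum>s\<in>UNIV. \<Sum>a\<in>UNIV. kl_term (us s a) (u s a))
            + c / (1 - c) * (\<Sum>s\<in>UNIV. kl_term (utilde us s) (utilde u s)))"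
  by (simp add: Lc_def kl_term_def diff_add_eq add_diff_eq)

lemma Lc_has_real_derivative:
  assumes u: "\<And>s a. u t s a > 0" and us: "\<And>s a. us s a > 0"
    and v_deriv: "\<And>s. ((\<lambda>t. v t s) has_real_derivative v' s) (at t)"
    and u_deriv: "\<And>s a. ((\<lambda>t. u t s a) has_real_derivative u' s a) (at t)"
  shows "((\<lambda>t. Lc c \<alpha> \<tau> vs us (v t) (u t)) has_real_derivative
           \<alpha> * (\<Sum>s\<in>UNIV. (v t s - vs s) * v' s)
           + \<tau> * ((\<Sum>s\<in>UNIV. \<Sum>a\<in>UNIV. (1 - us s a / u t s a) * u' s a)
                  + c / (1 - c) * (\<Sum>s\<in>UNIV. (1 - utilde us s / utilde (u t) s) * (\<Sum>a\<in>UNIV. u' s a))))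
         (at t)"
proof -
  have utilde_u: "utilde (u t) s > 0" and utilde_us: "utilde us s > 0" for s
    using u us by (auto intro: utilde_pos)
  have utilde_deriv: "((\<lambda>t. utilde (u t) s) has_real_derivative (\<Sum>a\<in>UNIV. u' s a)) (at t)" for s
    unfolding utilde_def by (intro DERIV_sum u_deriv)
  have "((\<lambda>t. Lc c \<alpha> \<tau> vs us (v t) (u t)) has_real_derivative
           \<alpha> / 2 * (\<Sum>s\<in>UNIV. 2 * (v t s - vs s) * v' s)
           + \<tau> * ((\<Sum>s\<in>UNIV. \<Sum>a\<in>UNIV. (1 - us s a / u t s a) * u' s a)
                  + c / (1 - c) * (\<Sum>s\<in>UNIV. (1 - utilde us s / utilde (u t) s) * (\<Sum>a\<in>UNIV. u' s a))))
         (at t)"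
    unfolding Lc_eq_kl_term
    by (intro DERIV_add DERIV_cmult DERIV_sum kl_term_has_real_derivative utilde_deriv u_deriv u us
        utilde_u utilde_us) (auto intro!: derivative_eq_intros v_deriv)
  then show ?thesis
    by (rule DERIV_cong) (simp add: sum_distrib_left algebra_simps)
qed

lemma Lc_has_real_derivative_dissipation:
  fixes P :: "'a::finite \<Rightarrow> 's::finite \<Rightarrow> 's \<Rightarrow> real"
  assumes saddle: "is_saddle \<alpha> \<gamma> \<tau> P r vs us" and u: "\<And>s a. u t s a > 0"
    and "c \<noteq> 1" "\<tau> \<noteq> 0" "\<alpha> \<noteq> 0"
    and v_ode: "\<And>s. ((\<lambda>t. v t s) has_real_derivative vfield \<alpha> \<gamma> P (v t) (u t) s) (at t)"
    and u_ode: "\<And>s a. ((\<lambda>t. u t s a) has_real_derivative ufield c \<gamma> \<tau> P r (v t) (u t) s a) (at t)"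
  shows "((\<lambda>t. Lc c \<alpha> \<tau> vs us (v t) (u t)) has_real_derivative - dissipation \<alpha> \<tau> vs us (v t) (u t)) (at t)"
proof -
  have "\<And>s a. us s a > 0" using saddle by (simp add: is_saddle_def)
  from Lc_has_real_derivative
    [where u=u and t=t and v=v and us=us and c=c and \<alpha>=\<alpha> and \<tau>=\<tau> and vs=vs, OF u this v_ode u_ode]
  show ?thesis
    unfolding Lc_rate_eq_neg_dissipation[where u="u t", OF saddle u assms(3-5)] .
qed

lemma sum_diff_mult_ln_policy_nonneg:
  assumes "\<And>a. u s a > 0" "\<And>a. us s a > 0"
  shows "0 \<le> (\<Sum>a\<in>UNIV. (u s a - us s a) * (ln (policy u s a) - ln (policy us s a)))"
  unfolding policy_def utilde_def using assms by (rule sum_diff_mult_ln_normalized_nonneg)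

lemma dissipation_nonneg:
  assumes "\<alpha> \<ge> 0" "\<tau> \<ge> 0" "\<And>s a. u s a > 0" "\<And>s a. us s a > 0"
  shows "0 \<le> dissipation \<alpha> \<tau> vs us v u"
  unfolding dissipation_def using assms
  by (intro add_nonneg_nonneg mult_nonneg_nonneg sum_nonneg sum_diff_mult_ln_policy_nonneg) auto

lemma dissipation_eq_0_imp:
  assumes "\<alpha> > 0" "\<tau> > 0" and u: "\<And>s a. u s a > 0" and us: "\<And>s a. us s a > 0"
    and "dissipation \<alpha> \<tau> vs us v u = 0"
  shows "v = vs" and "policy u = policy us"
proof -
  have value_part: "0 \<le> (\<Sum>s\<in>UNIV. (v s - vs s)\<^sup>2)" by (simp add: sum_nonneg)
  have policy_part: "0 \<le> (\<Sum>s\<in>UNIV. \<Sum>a\<in>UNIV. (u s a - us s a) * (ln (policy u s a) - ln (policy us s a)))"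
    using u us by (intro sum_nonneg sum_diff_mult_ln_policy_nonneg)
  have "(\<Sum>s\<in>UNIV. (v s - vs s)\<^sup>2) = 0"
    and policy_0: "(\<Sum>s\<in>UNIV. \<Sum>a\<in>UNIV. (u s a - us s a) * (ln (policy u s a) - ln (policy us s a))) = 0"
    using assms(1,2,5) value_part policy_part unfolding dissipation_def
    by (smt (verit) mult_pos_pos mult_nonneg_nonneg)+
  then show "v = vs" by (simp add: sum_nonneg_eq_0_iff fun_eq_iff)
  show "policy u = policy us"
  proof (intro ext)
    fix s a
    have "(\<Sum>a\<in>UNIV. (u s a - us s a) * (ln (policy u s a) - ln (policy us s a))) = 0"
      using policy_0 u us by (simp add: sum_nonneg_eq_0_iff sum_diff_mult_ln_policy_nonneg)
    then show "policy u s a = policy us s a"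
      unfolding policy_def utilde_def
      by (rule sum_diff_mult_ln_normalized_eq_0_imp[of "u s" "us s", OF u us])
  qed
qed

lemma stationary_point_eq_saddle:
  fixes P :: "'a::finite \<Rightarrow> 's::finite \<Rightarrow> 's \<Rightarrow> real"
  assumes P_nonneg: "\<And>a s s'. P a s s' \<ge> 0" and P_sum: "\<And>a s. (\<Sum>s'\<in>UNIV. P a s s') = 1"
    and \<gamma>: "0 \<le> \<gamma>" "\<gamma> < 1" and \<alpha>: "\<alpha> \<noteq> 0"
    and saddle: "is_saddle \<alpha> \<gamma> \<tau> P r vs us"
    and u: "\<And>s a. u s a > 0" and policy: "policy u = policy us"
    and stationary: "\<And>s'. vfield \<alpha> \<gamma> P vs u s' = 0"
  shows "u = us"
proof -
  have us: "\<And>s a. us s a > 0" using saddle by (simp add: is_saddle_def)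
  define w where "w s = utilde u s - utilde us s" for s
  have policy_nonneg: "policy us s a \<ge> 0" for s a
    using us utilde_pos[of us s] by (simp add: policy_def less_imp_le)
  have policy_sum: "(\<Sum>a\<in>UNIV. policy us s a) = 1" for s
    using utilde_pos[of us s] us by (simp add: policy_def utilde_def flip: sum_divide_distrib)
  have diff: "u s a - us s a = w s * policy us s a" for s a
    using fun_cong[OF fun_cong[OF policy, of s], of a] utilde_pos[of u s] utilde_pos[of us s] u us
    by (simp add: w_def policy_def field_simps)
  have "(\<Sum>s\<in>UNIV. \<Sum>a\<in>UNIV. Kmat \<gamma> P a s s' * (w s * policy us s a)) = 0" for s'
  proof -
    have "\<alpha> * vs s' = (\<Sum>s\<in>UNIV. \<Sum>a\<in>UNIV. Kmat \<gamma> P a s s' * u s a)"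
      using stationary[of s'] \<alpha> by (simp add: vfield_def field_simps)
    then show ?thesis
      using saddle_stationary_v[OF saddle, of s']
      by (simp add: diff[symmetric] right_diff_distrib sum_subtractf)
  qed
  then have "w = (\<lambda>s. 0)"
    by (rule Kmat_flow_eq_0_imp_zero[OF P_nonneg P_sum \<gamma> policy_nonneg policy_sum])
  then show ?thesis using diff by (simp add: fun_eq_iff)
qed

theorem lemma3p2:
  fixes P :: "'a::finite \<Rightarrow> 's::finite \<Rightarrow> 's \<Rightarrow> real"
    and r :: "'s \<Rightarrow> 'a \<Rightarrow> real"
    and \<gamma> \<tau> \<alpha> c :: real
    and vs :: "'s \<Rightarrow> real" and us :: "'s \<Rightarrow> 'a \<Rightarrow> real"
    and v :: "real \<Rightarrow> 's \<Rightarrow> real" and u :: "real \<Rightarrow> 's \<Rightarrow> 'a \<Rightarrow> real"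
    and I :: "real set"
  assumes P_nonneg: "\<And>a s s'. P a s s' \<ge> 0"
    and P_sum: "\<And>a s. (\<Sum>s'\<in>UNIV. P a s s') = 1"
    and r_nonneg: "\<And>s a. r s a \<ge> 0"
    and gamma: "0 < \<gamma>" "\<gamma> < 1"
    and tau: "\<tau> > 0"
    and alpha: "\<alpha> > 0"
    and c: "0 < c" "c < 1"
    and saddle: "is_saddle \<alpha> \<gamma> \<tau> P r vs us"
    and unique: "\<And>v' u'. is_saddle \<alpha> \<gamma> \<tau> P r v' u' \<Longrightarrow> v' = vs \<and> u' = us"
    and I: "open I" "is_interval I" "I \<noteq> {}"
    and u_pos: "\<And>t s a. t \<in> I \<Longrightarrow> u t s a > 0"
    and v_ode: "\<And>t s'. t \<in> I \<Longrightarrow>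
        ((\<lambda>t. v t s') has_real_derivative vfield \<alpha> \<gamma> P (v t) (u t) s') (at t)"
    and u_ode: "\<And>t s a. t \<in> I \<Longrightarrow>
        ((\<lambda>t. u t s a) has_real_derivative ufield c \<gamma> \<tau> P r (v t) (u t) s a) (at t)"
  shows "(\<forall>t\<in>I. \<exists>D. ((\<lambda>t. Lc c \<alpha> \<tau> vs us (v t) (u t)) has_real_derivative D) (at t) \<and> D \<le> 0)
       \<and> ((\<forall>t\<in>I. ((\<lambda>t. Lc c \<alpha> \<tau> vs us (v t) (u t)) has_real_derivative 0) (at t))
           \<longrightarrow> (\<forall>t\<in>I. v t = vs \<and> u t = us))"
proof -
  have us: "\<And>s a. us s a > 0" using saddle by (simp add: is_saddle_def)
  have Lc_deriv: "((\<lambda>t. Lc c \<alpha> \<tau> vs us (v t) (u t)) has_real_derivative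
      - dissipation \<alpha> \<tau> vs us (v t) (u t)) (at t)" if "t \<in> I" for t
    using c tau alpha that by (intro Lc_has_real_derivative_dissipation[OF saddle] u_pos v_ode u_ode) auto
  have dissipation_nonneg_at: "0 \<le> dissipation \<alpha> \<tau> vs us (v t) (u t)" if "t \<in> I" for t
    using alpha tau u_pos[OF that] us by (intro dissipation_nonneg) auto
  show ?thesis
  proof (intro conjI impI ballI)
    fix t assume "t \<in> I"
    then show "\<exists>D. ((\<lambda>t. Lc c \<alpha> \<tau> vs us (v t) (u t)) has_real_derivative D) (at t) \<and> D \<le> 0"
      using Lc_deriv dissipation_nonneg_at by (intro exI conjI) auto
  next
    assume "\<forall>t\<in>I. ((\<lambda>t. Lc c \<alpha> \<tau> vs us (v t) (u t)) has_real_derivative 0) (at t)"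
    then have "dissipation \<alpha> \<tau> vs us (v t) (u t) = 0" if "t \<in> I" for t
      using DERIV_unique[OF Lc_deriv[OF that]] that by fastforce
    then have v_eq: "v t = vs" and policy_eq: "policy (u t) = policy us" if "t \<in> I" for t
      using dissipation_eq_0_imp[where u="u t" and us=us and v="v t" and vs=vs, OF alpha tau u_pos[OF that] us]
        that by auto
    fix t assume t: "t \<in> I"
    show "v t = vs" using v_eq[OF t] .
    have "((\<lambda>t. v t s) has_real_derivative 0) (at t)" for s
      using t I(1) v_eq by (intro has_field_derivative_transform_within_open[OF DERIV_const[of "vs s"]]) auto
    then have stationary: "vfield \<alpha> \<gamma> P vs (u t) s = 0" for s
      using DERIV_unique[OF v_ode[OF t, of s]] v_eq[OF t] by simp
    show "u t = us"
      using alpha by (intro stationary_point_eq_saddle[OF P_nonneg P_sum less_imp_le[OF gamma(1)] gamma(2) _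
          saddle u_pos[OF t] policy_eq[OF t] stationary]) simp
  qed
qed

end
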